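(* Let $p\in(0,1]$. In the random node-based stable matching model described in the context, the probability $D^{(N)}(i,j)=\mathbb P(i\text{ and }j\text{ are matched to each other in the stable matching})$ does not depend on $N$ as long as $N\ge\max(i,j)$; write it $D(i,j)$. It satisfies $D(i,i)=0$, $D(i,j)=D(j,i)$, $D(1,k)=p(1-p)^{k-2}$ for $k\ge2$, and for all integers $2\le i<j$, $$D(i,j)=\bigl(1-(1-p)^{i-2}\bigr)D(i-2,j-2)+\bigl((1-p)^{i-1}-(1-p)^{j-2}\bigr)D(i-1,j-2)+(1-p)^{j-1}D(i-1,j-1),$$ with the convention that the first term is $0$ when $i=2$.
   Context: Model: $N\ge2$ nodes labeled $1,\dots,N$; the acceptance graph $G$ is an Erdős–Rényi random graph $\mathcal G(N,p)$ (each of the $\binom N2$ possible edges present independently with probability $p$). Preferences are node-based: every node prefers a neighbor with smaller label to one with larger label. A matching $M\subseteq E(G)$ is stable if there is no edge $\{u,v\}\in E(G)\setminus M$ such that each of $u,v$ is either unmatched in $M$ or matched in $M$ to a node with larger label than the other endpoint. For such preferences there is a unique stable matching. *)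

theory Defs
  imports Main "HOL-Library.Disjoint_Sets" Complex_Main
begin

definition all_edges :: "nat \<Rightarrow> nat set set" where
  "all_edges N = {{u, v} | u v. u \<in> {1..N} \<and> v \<in> {1..N} \<and> u \<noteq> v}"

definition er_weight :: "nat \<Rightarrow> real \<Rightarrow> nat set set \<Rightarrow> real" where
  "er_weight N p E = p ^ card E * (1 - p) ^ (card (all_edges N) - card E)"

definition er_prob :: "nat \<Rightarrow> real \<Rightarrow> (nat set set \<Rightarrow> bool) \<Rightarrow> real" where
  "er_prob N p P = (\<Sum>E\<in>{E. E \<subseteq> all_edges N \<and> P E}. er_weight N p E)"

definition is_matching :: "nat set set \<Rightarrow> bool" where
  "is_matching M \<longleftrightarrow> (\<forall>e\<in>M. \<forall>f\<in>M. e \<noteq> f \<longrightarrow> e \<inter> f = {})"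

definition matched :: "nat set set \<Rightarrow> nat \<Rightarrow> bool" where
  "matched M u \<longleftrightarrow> (\<exists>w. {u, w} \<in> M)"

text \<open>u weakly prefers v to its current situation in M: u is unmatched, or matched to a
  node with larger label than v (smaller labels are preferred).\<close>
definition would_switch :: "nat set set \<Rightarrow> nat \<Rightarrow> nat \<Rightarrow> bool" where
  "would_switch M u v \<longleftrightarrow> \<not> matched M u \<or> (\<exists>w. {u, w} \<in> M \<and> w > v)"

definition stable :: "nat set set \<Rightarrow> nat set set \<Rightarrow> bool" where
  "stable E M \<longleftrightarrow> M \<subseteq> E \<and> is_matching M \<and>
     \<not> (\<exists>u v. {u, v} \<in> E - M \<and> would_switch M u v \<and> would_switch M v u)"

definition stable_matching :: "nat set set \<Rightarrow> nat set set" where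
  "stable_matching E = (THE M. stable E M)"

definition DN :: "nat \<Rightarrow> real \<Rightarrow> nat \<Rightarrow> nat \<Rightarrow> real" where
  "DN N p i j = er_prob N p (\<lambda>E. {i, j} \<in> stable_matching E)"

end

theory Submission
  imports Defs
begin

text \<open>The proof follows the greedy description of the stable matching: the smallest node is
  matched to its smallest neighbour and both are removed.  For a random graph the
  neighbourhood of the smallest node v0 is an independent random subset of the other
  nodes, and after removing v0 and its partner the remaining graph is again a random graph
  on the remaining nodes.  So the matching probability of two nodes is a mixture of
  matching probabilities on smaller vertex sets, and an induction on the number of vertices
  shows that it only depends on the ranks of the two nodes (pair_prob_rank).\<close>

section \<open>Expectations over a random subset\<close>

text \<open>A random subset of a finite set A that contains every element independently with
  probability p takes the value F with probability subset_weight p A F;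
  subset_exp p A f is the expectation of f on this random subset.  The Erdos-Renyi graph
  is the special case where A is the set of all possible edges.\<close>

definition subset_weight :: "real \<Rightarrow> 'a set \<Rightarrow> 'a set \<Rightarrow> real" where
  "subset_weight p A F = p ^ card F * (1 - p) ^ (card A - card F)"

definition subset_exp :: "real \<Rightarrow> 'a set \<Rightarrow> ('a set \<Rightarrow> real) \<Rightarrow> real" where
  "subset_exp p A f = (\<Sum>F\<in>Pow A. subset_weight p A F * f F)"

lemma subset_exp_cong:
  "(\<And>F. F \<subseteq> A \<Longrightarrow> f F = g F) \<Longrightarrow> subset_exp p A f = subset_exp p A g"
  unfolding subset_exp_def by (rule sum.cong) auto

lemma subset_exp_empty: "subset_exp p {} f = f {}"
  by (simp add: subset_exp_def subset_weight_def)

lemma subset_exp_singleton: "subset_exp p {a} f = (1 - p) * f {} + p * f {a}"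
proof -
  have "Pow {a} = {{}, {a}}" by blast
  then show ?thesis by (simp add: subset_exp_def subset_weight_def)
qed

lemma bij_betw_union_Pow:
  assumes "A \<inter> B = {}"
  shows "bij_betw (\<lambda>(F, G). F \<union> G) (Pow A \<times> Pow B) (Pow (A \<union> B))"
proof (rule bij_betw_byWitness[where f' = "\<lambda>X. (X \<inter> A, X \<inter> B)"])
  show "\<forall>x\<in>Pow A \<times> Pow B. (\<lambda>X. (X \<inter> A, X \<inter> B)) ((\<lambda>(F, G). F \<union> G) x) = x"
    using assms by auto
qed auto

lemma subset_weight_union:
  assumes "finite A" "finite B" "A \<inter> B = {}" "F \<subseteq> A" "G \<subseteq> B"
  shows "subset_weight p (A \<union> B) (F \<union> G) = subset_weight p A F * subset_weight p B G"
proof -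
  have finFG: "finite F" "finite G" using assms by (auto intro: finite_subset)
  have cFG: "card (F \<union> G) = card F + card G"
    using assms finFG by (intro card_Un_disjoint) auto
  have cAB: "card (A \<union> B) = card A + card B" using assms card_Un_disjoint by blast
  have "card F \<le> card A" "card G \<le> card B" using assms by (auto intro: card_mono)
  then have "card (A \<union> B) - card (F \<union> G) = (card A - card F) + (card B - card G)"
    using cFG cAB by simp
  then show ?thesis unfolding subset_weight_def using cFG by (simp add: power_add)
qed

lemma subset_exp_union:
  assumes "finite A" "finite B" "A \<inter> B = {}"
  shows "subset_exp p (A \<union> B) f = subset_exp p A (\<lambda>F. subset_exp p B (\<lambda>G. f (F \<union> G)))"
proof -
  have "subset_exp p (A \<union> B) f
      = (\<Sum>(F, G)\<in>Pow A \<times> Pow B. subset_weight p (A \<union> B) (F \<union> G) * f (F \<union> G))"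
    unfolding subset_exp_def
    using sum.reindex_bij_betw[OF bij_betw_union_Pow[OF assms(3)],
        of "\<lambda>X. subset_weight p (A \<union> B) X * f X"]
    by (simp add: case_prod_unfold)
  also have "\<dots> = (\<Sum>(F, G)\<in>Pow A \<times> Pow B. subset_weight p A F * (subset_weight p B G * f (F \<union> G)))"
    using assms by (intro sum.cong) (auto simp: subset_weight_union)
  also have "\<dots> = subset_exp p A (\<lambda>F. subset_exp p B (\<lambda>G. f (F \<union> G)))"
    by (simp add: subset_exp_def sum_distrib_left sum.cartesian_product)
  finally show ?thesis .
qed

lemma subset_exp_const: "finite A \<Longrightarrow> subset_exp p A (\<lambda>_. c) = c"
proof (induction A rule: finite_induct)
  case empty
  then show ?case by (simp add: subset_exp_empty)
next
  case (insert x A)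
  then have "subset_exp p ({x} \<union> A) (\<lambda>_. c) = c"
    by (subst subset_exp_union) (auto simp: subset_exp_singleton algebra_simps)
  then show ?case by simp
qed

lemma subset_exp_image:
  assumes "inj_on h A"
  shows "subset_exp p (h ` A) f = subset_exp p A (\<lambda>F. f (h ` F))"
proof -
  have bij: "bij_betw (image h) (Pow A) (Pow (h ` A))"
    using assms by (intro bij_betw_Pow) (simp add: bij_betw_imageI)
  have card_h: "card (h ` F) = card F" if "F \<subseteq> A" for F
    using assms that by (meson card_image inj_on_subset)
  show ?thesis
    unfolding subset_exp_def subset_weight_def
    by (subst sum.reindex_bij_betw[OF bij, symmetric]) (auto simp: card_h card_image assms intro!: sum.cong)
qed

text \<open>rank_below S x is the number of elements of S below x (the 0-based rank of x in S).\<close>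

definition rank_below :: "nat set \<Rightarrow> nat \<Rightarrow> nat" where
  "rank_below S x = card {y\<in>S. y < x}"

text \<open>Law of the minimum of a random subset of a finite set of naturals: it is empty with
  probability (1-p) to the power card S, and its minimum is m with probability
  p (1-p)^(rank of m), since exactly the smaller elements have to be absent.\<close>

lemma subset_exp_Min:
  assumes "finite S"
  shows "subset_exp p S (\<lambda>T. if T = {} then c0 else c (Min T))
     = (1 - p) ^ card S * c0 + (\<Sum>m\<in>S. p * (1 - p) ^ rank_below S m * c m)"
  using assms
proof (induction S rule: finite_linorder_min_induct)
  case empty
  then show ?case by (simp add: subset_exp_empty)
next
  case (insert b A)
  have "b \<notin> A" using insert.hyps by auto
  have Min_insert_b: "Min (insert b G) = b" if "G \<subseteq> A" for G
    using insert.hyps that by (metis Min_insert2 finite_insert finite_subset less_imp_le subsetD)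
  have rank_shift: "rank_below (insert b A) m = Suc (rank_below A m)" if "m \<in> A" for m
  proof -
    have "{x\<in>insert b A. x < m} = insert b {x\<in>A. x < m}" using insert.hyps that by auto
    then show ?thesis unfolding rank_below_def using \<open>b \<notin> A\<close> insert.hyps by simp
  qed
  have "rank_below (insert b A) b = 0" using insert.hyps by (auto simp: rank_below_def)
  then have sum_split: "(\<Sum>m\<in>insert b A. p * (1 - p) ^ rank_below (insert b A) m * c m)
      = p * c b + (1 - p) * (\<Sum>m\<in>A. p * (1 - p) ^ rank_below A m * c m)"
    using insert.hyps \<open>b \<notin> A\<close> by (simp add: rank_shift sum_distrib_left mult_ac)
  define g where "g = (\<lambda>T. if T = {} then c0 else c (Min T))"
  have later: "subset_exp p A (\<lambda>G. g ({b} \<union> G)) = c b"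
  proof -
    have "subset_exp p A (\<lambda>G. g ({b} \<union> G)) = subset_exp p A (\<lambda>_. c b)"
      by (rule subset_exp_cong) (simp add: g_def Min_insert_b)
    then show ?thesis using insert.hyps by (simp add: subset_exp_const)
  qed
  have "subset_exp p ({b} \<union> A) g = subset_exp p {b} (\<lambda>F. subset_exp p A (\<lambda>G. g (F \<union> G)))"
    using insert.hyps \<open>b \<notin> A\<close> by (intro subset_exp_union) auto
  also have "\<dots> = (1 - p) * subset_exp p A g + p * c b"
    by (simp only: subset_exp_singleton Un_empty_left later)
  finally have "subset_exp p (insert b A) g = (1 - p) * subset_exp p A g + p * c b"
    by simp
  with insert.IH \<open>b \<notin> A\<close> insert.hyps(1) show ?case
    unfolding g_def sum_split by (simp add: algebra_simps)
qed

lemma er_prob_eq_subset_exp: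
  "er_prob N p P = subset_exp p (all_edges N) (\<lambda>E. if P E then 1 else 0)"
proof -
  have "all_edges N \<subseteq> Pow {1..N}" unfolding all_edges_def by auto
  then have fin: "finite (Pow (all_edges N))" by (simp add: finite_subset)
  have "{E. E \<subseteq> all_edges N \<and> P E} = {E\<in>Pow (all_edges N). P E}" by auto
  then have "er_prob N p P = (\<Sum>E\<in>{E\<in>Pow (all_edges N). P E}. subset_weight p (all_edges N) E)"
    unfolding er_prob_def er_weight_def subset_weight_def by simp
  also have "\<dots> = (\<Sum>E\<in>Pow (all_edges N). if P E then subset_weight p (all_edges N) E else 0)"
    using fin by (rule sum.inter_filter)
  also have "\<dots> = subset_exp p (all_edges N) (\<lambda>E. if P E then 1 else 0)"
    unfolding subset_exp_def by (rule sum.cong) auto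
  finally show ?thesis .
qed

section \<open>The stable matching is built greedily\<close>

text \<open>With node-based preferences the stable matching can be built greedily: the smallest
  vertex v0 of the graph and its smallest neighbour m must be matched together (they are
  each other's first choice), and the rest of the stable matching is the stable matching
  of the graph with v0 and m deleted.\<close>

definition proper_graph :: "nat set set \<Rightarrow> bool" where
  "proper_graph E \<longleftrightarrow> (\<forall>e\<in>E. \<exists>u v. e = {u, v} \<and> u \<noteq> v)"

definition first_pair :: "nat set set \<Rightarrow> nat \<Rightarrow> nat \<Rightarrow> bool" where
  "first_pair E v0 m \<longleftrightarrow> {v0, m} \<in> E \<and> (\<forall>e\<in>E. \<forall>x\<in>e. v0 \<le> x) \<and> (\<forall>x. {v0, x} \<in> E \<longrightarrow> m \<le> x)"

lemma proper_graph_subset: "proper_graph E \<Longrightarrow> F \<subseteq> E \<Longrightarrow> proper_graph F"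
  unfolding proper_graph_def by auto

lemma would_switch_Diff_other:
  assumes "x \<notin> e"
  shows "would_switch (M - {e}) x y \<longleftrightarrow> would_switch M x y"
proof -
  have "{x, w} \<in> M - {e} \<longleftrightarrow> {x, w} \<in> M" for w
    using assms by auto
  then show ?thesis unfolding would_switch_def matched_def by simp
qed

text \<open>Every stable matching contains the first pair: otherwise the first pair would block,
  since v0 and m are each other's favourite possible partners.\<close>

lemma first_pair_in_stable:
  assumes st: "stable E M" and fp: "first_pair E v0 m"
  shows "{v0, m} \<in> M"
proof (rule ccontr)
  assume notin: "{v0, m} \<notin> M"
  have vm: "{v0, m} \<in> E" and low: "\<forall>e\<in>E. \<forall>x\<in>e. v0 \<le> x"
    and mn: "\<forall>x. {v0, x} \<in> E \<longrightarrow> m \<le> x"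
    using fp unfolding first_pair_def by auto
  have ME: "M \<subseteq> E" using st unfolding stable_def by auto
  have "would_switch M v0 m"
  proof (cases "matched M v0")
    case True
    then obtain w where w: "{v0, w} \<in> M" unfolding matched_def by auto
    then have "{v0, w} \<in> E" "w \<noteq> m" using ME notin by auto
    then have "m < w" using mn by (simp add: order.not_eq_order_implies_strict)
    then show ?thesis using w unfolding would_switch_def by auto
  qed (simp add: would_switch_def)
  moreover have "would_switch M m v0"
  proof (cases "matched M m")
    case True
    then obtain w where w: "{m, w} \<in> M" unfolding matched_def by auto
    then have "{m, w} \<in> E" "w \<noteq> v0" using ME notin by (auto simp: insert_commute)
    then have "v0 < w" using low by (simp add: order.not_eq_order_implies_strict)
    then show ?thesis using w unfolding would_switch_def by auto
  qed (simp add: would_switch_def)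
  ultimately show False using st vm notin unfolding stable_def by blast
qed

lemma stable_remove_pair:
  assumes st: "stable E M" and inM: "{v0, m} \<in> M"
  shows "stable {e\<in>E. v0 \<notin> e \<and> m \<notin> e} (M - {{v0, m}})"
proof -
  have ME: "M \<subseteq> E" and mat: "is_matching M"
    and no_block: "\<not> (\<exists>u v. {u, v} \<in> E - M \<and> would_switch M u v \<and> would_switch M v u)"
    using st unfolding stable_def by auto
  let ?E' = "{e\<in>E. v0 \<notin> e \<and> m \<notin> e}" and ?M' = "M - {{v0, m}}"
  have "?M' \<subseteq> ?E'"
  proof
    fix e assume e: "e \<in> ?M'"
    then have "e \<inter> {v0, m} = {}" using mat inM unfolding is_matching_def by auto
    then show "e \<in> ?E'" using e ME by auto
  qed
  moreover have "is_matching ?M'" using mat unfolding is_matching_def by auto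
  moreover have "\<not> (\<exists>u v. {u, v} \<in> ?E' - ?M' \<and> would_switch ?M' u v \<and> would_switch ?M' v u)"
  proof
    assume "\<exists>u v. {u, v} \<in> ?E' - ?M' \<and> would_switch ?M' u v \<and> would_switch ?M' v u"
    then obtain u v where uv: "{u, v} \<in> ?E' - ?M'" "would_switch ?M' u v" "would_switch ?M' v u"
      by blast
    then have "u \<notin> {v0, m}" "v \<notin> {v0, m}" by auto
    with uv have "{u, v} \<in> E - M" "would_switch M u v" "would_switch M v u"
      by (auto simp: would_switch_Diff_other)
    with no_block show False by blast
  qed
  ultimately show ?thesis unfolding stable_def by auto
qed

lemma not_would_switch:
  assumes "matched M x" "\<And>w. {x, w} \<in> M \<Longrightarrow> w \<le> y"
  shows "\<not> would_switch M x y"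
proof -
  have "\<not> (\<exists>w. {x, w} \<in> M \<and> y < w)" using assms(2) by (meson not_le)
  then show ?thesis using assms(1) unfolding would_switch_def by blast
qed

text \<open>After adding the first pair, v0 and m are matched to partners at least as good as
  any other neighbour, so they wish to switch to nobody.\<close>

lemma first_pair_settled:
  assumes fp: "first_pair E v0 m" and ME': "M \<subseteq> {e\<in>E. v0 \<notin> e \<and> m \<notin> e}"
  shows "{v0, y} \<in> E \<Longrightarrow> \<not> would_switch (insert {v0, m} M) v0 y"
    and "{m, y} \<in> E \<Longrightarrow> \<not> would_switch (insert {v0, m} M) m y"
proof -
  let ?M = "insert {v0, m} M"
  have low: "\<forall>e\<in>E. \<forall>x\<in>e. v0 \<le> x" and mn: "\<forall>x. {v0, x} \<in> E \<longrightarrow> m \<le> x"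
    using fp unfolding first_pair_def by auto
  show "\<not> would_switch ?M v0 y" if "{v0, y} \<in> E"
  proof (rule not_would_switch)
    show "matched ?M v0" unfolding matched_def by blast
  next
    fix w assume "{v0, w} \<in> ?M"
    then have "{v0, w} = {v0, m}" using ME' by auto
    then have "w = m" by (auto simp: doubleton_eq_iff)
    then show "w \<le> y" using mn that by blast
  qed
  show "\<not> would_switch ?M m y" if "{m, y} \<in> E"
  proof (rule not_would_switch)
    have "{m, v0} \<in> ?M" by (simp add: insert_commute)
    then show "matched ?M m" unfolding matched_def by blast
  next
    fix w assume "{m, w} \<in> ?M"
    then have "{m, w} = {v0, m}" using ME' by auto
    then have "w = v0" by (auto simp: doubleton_eq_iff)
    then show "w \<le> y" using low that by blast
  qed
qed

text \<open>Conversely, adding the first pair to a stable matching of the reduced graph gives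
  a stable matching: a blocking edge cannot contain v0 or m, so it would already block in
  the reduced graph.\<close>

lemma stable_extend_first_pair:
  assumes st: "stable {e\<in>E. v0 \<notin> e \<and> m \<notin> e} M" and fp: "first_pair E v0 m"
  shows "stable E (insert {v0, m} M)"
proof -
  let ?E' = "{e\<in>E. v0 \<notin> e \<and> m \<notin> e}" and ?M = "insert {v0, m} M"
  have ME': "M \<subseteq> ?E'" and mat: "is_matching M"
    and no_block: "\<not> (\<exists>u v. {u, v} \<in> ?E' - M \<and> would_switch M u v \<and> would_switch M v u)"
    using st unfolding stable_def by auto
  have "?M - {{v0, m}} = M" using ME' by auto
  then have ws_eq: "would_switch ?M x y \<longleftrightarrow> would_switch M x y" if "x \<notin> {v0, m}" for x y
    using would_switch_Diff_other[OF that, of ?M y] by simp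
  have "\<not> (\<exists>u v. {u, v} \<in> E - ?M \<and> would_switch ?M u v \<and> would_switch ?M v u)"
  proof
    assume "\<exists>u v. {u, v} \<in> E - ?M \<and> would_switch ?M u v \<and> would_switch ?M v u"
    then obtain u v where uv: "{u, v} \<in> E - ?M" "would_switch ?M u v" "would_switch ?M v u"
      by blast
    have "{v, u} \<in> E" using uv(1) by (simp add: insert_commute)
    then have "u \<notin> {v0, m}" "v \<notin> {v0, m}"
      using uv first_pair_settled[OF fp ME'] by auto
    with uv have "{u, v} \<in> ?E' - M" "would_switch M u v" "would_switch M v u"
      by (auto simp: ws_eq)
    with no_block show False by blast
  qed
  moreover have "is_matching ?M" using mat ME' unfolding is_matching_def by blast
  moreover have "{v0, m} \<in> E" using fp unfolding first_pair_def by blast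
  ultimately show ?thesis using ME' unfolding stable_def by auto
qed


lemma first_pair_exists:
  assumes "finite E" "proper_graph E" "E \<noteq> {}"
  obtains v0 m where "first_pair E v0 m"
proof -
  have "finite e" if "e \<in> E" for e using assms(2) that unfolding proper_graph_def by auto
  then have fin_U: "finite (\<Union>E)" using assms(1) by (rule finite_Union[rotated])
  obtain e0 where e0: "e0 \<in> E" using assms(3) by blast
  then obtain u v where "e0 = {u, v}" using assms(2) unfolding proper_graph_def by blast
  then have "\<Union>E \<noteq> {}" using e0 by blast
  define v0 where "v0 = Min (\<Union>E)"
  have low: "\<forall>e\<in>E. \<forall>x\<in>e. v0 \<le> x" unfolding v0_def using fin_U by (meson Min_le UnionI)
  obtain e where e: "e \<in> E" "v0 \<in> e"
    unfolding v0_def using Min_in[OF fin_U \<open>\<Union>E \<noteq> {}\<close>] by blast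
  then obtain a b where ab: "e = {a, b}" using assms(2) unfolding proper_graph_def by blast
  have "\<exists>x. {v0, x} \<in> E"
  proof (cases "v0 = a")
    case True
    then show ?thesis using ab e(1) by blast
  next
    case False
    then have "v0 = b" using ab e(2) by simp
    then have "e = {v0, a}" using ab by (simp add: insert_commute)
    then show ?thesis using e(1) by blast
  qed
  then obtain x where x: "{v0, x} \<in> E" by blast
  let ?nbrs = "{x. {v0, x} \<in> E}"
  have fin_nbrs: "finite ?nbrs" by (rule finite_subset[OF _ fin_U]) blast
  have "?nbrs \<noteq> {}" using x by blast
  define m where "m = Min ?nbrs"
  have "{v0, m} \<in> E" using Min_in[OF fin_nbrs \<open>?nbrs \<noteq> {}\<close>] unfolding m_def by simp
  moreover have "\<forall>x. {v0, x} \<in> E \<longrightarrow> m \<le> x" unfolding m_def using fin_nbrs by simp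
  ultimately show ?thesis using that low unfolding first_pair_def by blast
qed

text \<open>Existence and uniqueness of the stable matching, by peeling off first pairs.\<close>

lemma stable_unique: "finite E \<Longrightarrow> proper_graph E \<Longrightarrow> \<exists>!M. stable E M"
proof (induction "card E" arbitrary: E rule: less_induct)
  case less
  show ?case
  proof (cases "E = {}")
    case True
    then have "stable E M \<longleftrightarrow> M = {}" for M
      unfolding stable_def is_matching_def by auto
    then show ?thesis by auto
  next
    case False
    then obtain v0 m where fp: "first_pair E v0 m"
      using first_pair_exists less.prems by blast
    let ?E' = "{e\<in>E. v0 \<notin> e \<and> m \<notin> e}"
    have "card ?E' < card E"
      using fp less.prems(1) unfolding first_pair_def by (intro psubset_card_mono) auto
    moreover have "finite ?E'" using less.prems(1) by simp
    moreover have "proper_graph ?E'" using less.prems(2) by (rule proper_graph_subset) auto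
    ultimately have "\<exists>!M. stable ?E' M" by (rule less.hyps)
    then obtain M' where M': "stable ?E' M'" "\<And>M. stable ?E' M \<Longrightarrow> M = M'" by blast
    have "stable E (insert {v0, m} M')" using stable_extend_first_pair[OF M'(1) fp] .
    moreover have "M = insert {v0, m} M'" if "stable E M" for M
    proof -
      have "{v0, m} \<in> M" using that fp by (rule first_pair_in_stable)
      then have "M - {{v0, m}} = M'" using stable_remove_pair[OF that] M'(2) by blast
      then show ?thesis using \<open>{v0, m} \<in> M\<close> by blast
    qed
    ultimately show ?thesis by blast
  qed
qed

lemma stable_matching_stable:
  "finite E \<Longrightarrow> proper_graph E \<Longrightarrow> stable E (stable_matching E)"
  unfolding stable_matching_def by (rule theI') (rule stable_unique)

lemma stable_matching_first_pair:
  assumes "finite E" "proper_graph E" "first_pair E v0 m"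
  shows "stable_matching E = insert {v0, m} (stable_matching {e\<in>E. v0 \<notin> e \<and> m \<notin> e})"
proof -
  let ?E' = "{e\<in>E. v0 \<notin> e \<and> m \<notin> e}"
  have "stable ?E' (stable_matching ?E')"
    using assms by (intro stable_matching_stable) (auto intro: proper_graph_subset)
  then have "stable E (insert {v0, m} (stable_matching ?E'))"
    using stable_extend_first_pair assms(3) by blast
  then show ?thesis unfolding stable_matching_def
    using stable_unique[OF assms(1,2)] by (simp add: the1_equality)
qed

section \<open>One step of the greedy algorithm on a random graph\<close>

text \<open>Split the complete graph on insert v0 V (v0 below all of V) into
  the star at v0 and the complete graph on V.  By independence the star is sampled first;
  its neighbourhood T of v0 is a random subset of V, and v0 is matched to m = Min T if T is
  nonempty.  The edges at m are then irrelevant, which leaves a random graph on V - {m}.\<close>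

definition complete_edges :: "nat set \<Rightarrow> nat set set" where
  "complete_edges V = {{u, v} | u v. u \<in> V \<and> v \<in> V \<and> u \<noteq> v}"

lemma complete_edges_Pow: "complete_edges V \<subseteq> Pow V"
  unfolding complete_edges_def by auto

lemma finite_complete_edges: "finite V \<Longrightarrow> finite (complete_edges V)"
  using complete_edges_Pow finite_subset by blast

lemma proper_graph_complete_edges: "G \<subseteq> complete_edges V \<Longrightarrow> proper_graph G"
  unfolding proper_graph_def complete_edges_def by blast

lemma complete_edges_Diff: "complete_edges (V - {m}) = {e\<in>complete_edges V. m \<notin> e}"
  unfolding complete_edges_def by auto

lemma complete_edges_insert:
  "v0 \<notin> V \<Longrightarrow> complete_edges (insert v0 V) = (\<lambda>x. {v0, x}) ` V \<union> complete_edges V"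
  unfolding complete_edges_def by (auto simp: insert_commute)

lemma subset_exp_delete_vertex:
  assumes "finite V"
  shows "subset_exp p (complete_edges V) (\<lambda>G. g {e\<in>G. m \<notin> e})
       = subset_exp p (complete_edges (V - {m})) g"
proof -
  let ?H = "{e\<in>complete_edges V. m \<in> e}" and ?G = "complete_edges (V - {m})"
  have G_eq: "?G = {e\<in>complete_edges V. m \<notin> e}" by (rule complete_edges_Diff)
  have split: "complete_edges V = ?H \<union> ?G" and disj: "?H \<inter> ?G = {}"
    unfolding G_eq by blast+
  have fin: "finite ?H" "finite ?G"
    using assms by (simp_all add: finite_complete_edges)
  have "subset_exp p (complete_edges V) (\<lambda>G. g {e\<in>G. m \<notin> e})
      = subset_exp p (?H \<union> ?G) (\<lambda>G. g {e\<in>G. m \<notin> e})"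
    by (simp only: split[symmetric])
  also have "\<dots> = subset_exp p ?H (\<lambda>H. subset_exp p ?G (\<lambda>G. g {e\<in>H \<union> G. m \<notin> e}))"
    using fin disj by (rule subset_exp_union)
  also have "\<dots> = subset_exp p ?H (\<lambda>H. subset_exp p ?G g)"
  proof (rule subset_exp_cong, rule subset_exp_cong)
    fix H G assume "H \<subseteq> ?H" "G \<subseteq> ?G"
    then have "{e\<in>H \<union> G. m \<notin> e} = G" unfolding G_eq by blast
    then show "g {e\<in>H \<union> G. m \<notin> e} = g G" by simp
  qed
  also have "\<dots> = subset_exp p ?G g"
    using fin(1) by (rule subset_exp_const)
  finally show ?thesis .
qed

lemma stable_matching_star:
  assumes "finite V" "\<forall>x\<in>V. v0 < x" "T \<subseteq> V" "T \<noteq> {}" "G \<subseteq> complete_edges V"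
  shows "stable_matching ((\<lambda>x. {v0, x}) ` T \<union> G)
       = insert {v0, Min T} (stable_matching {e\<in>G. Min T \<notin> e})"
proof -
  let ?E = "(\<lambda>x. {v0, x}) ` T \<union> G" and ?m = "Min T"
  have fin_T: "finite T" using assms(1,3) finite_subset by blast
  have mT: "?m \<in> T" using fin_T assms(4) by simp
  have v0_notin: "v0 \<notin> V" using assms(2) by blast
  have E_sub: "?E \<subseteq> complete_edges (insert v0 V)"
    using complete_edges_insert[OF v0_notin] assms(3,5) by blast
  have fin_E: "finite ?E"
    using assms(1) by (intro finite_subset[OF E_sub] finite_complete_edges) simp
  have proper: "proper_graph ?E" using E_sub by (rule proper_graph_complete_edges)
  have star_edge: "v0 \<in> e" if "e \<in> (\<lambda>x. {v0, x}) ` T" for e using that by auto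
  have G_edge: "e \<subseteq> V" if "e \<in> G" for e using that assms(5) complete_edges_Pow by blast
  have "first_pair ?E v0 ?m"
    unfolding first_pair_def
  proof (intro conjI ballI allI impI)
    show "{v0, ?m} \<in> ?E" using mT by blast
  next
    fix e x assume "e \<in> ?E" "x \<in> e"
    then have "x \<in> insert v0 V" using E_sub complete_edges_Pow by blast
    then show "v0 \<le> x" using assms(2) by auto
  next
    fix x assume "{v0, x} \<in> ?E"
    moreover have "{v0, x} \<notin> G" using G_edge v0_notin by blast
    ultimately obtain t where t: "t \<in> T" "{v0, x} = {v0, t}" by blast
    moreover have "t \<noteq> v0" using t(1) assms(2,3) by auto
    ultimately have "x = t" by (auto simp: doubleton_eq_iff)
    then show "?m \<le> x" using fin_T t(1) by simp
  qed
  moreover have "{e\<in>?E. v0 \<notin> e \<and> ?m \<notin> e} = {e\<in>G. ?m \<notin> e}"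
    using star_edge G_edge v0_notin by blast
  ultimately show ?thesis
    using stable_matching_first_pair[OF fin_E proper] by simp
qed

lemma subset_exp_given_star:
  assumes "finite V" "\<forall>x\<in>V. v0 < x" "T \<subseteq> V" "T \<noteq> {}"
  shows "subset_exp p (complete_edges V) (\<lambda>G. f (stable_matching ((\<lambda>x. {v0, x}) ` T \<union> G)))
       = subset_exp p (complete_edges (V - {Min T})) (\<lambda>G. f (insert {v0, Min T} (stable_matching G)))"
proof -
  have "subset_exp p (complete_edges V) (\<lambda>G. f (stable_matching ((\<lambda>x. {v0, x}) ` T \<union> G)))
      = subset_exp p (complete_edges V)
          (\<lambda>G. f (insert {v0, Min T} (stable_matching {e\<in>G. Min T \<notin> e})))"
    by (intro subset_exp_cong) (simp add: stable_matching_star[OF assms])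
  also have "\<dots> = subset_exp p (complete_edges (V - {Min T}))
      (\<lambda>G. f (insert {v0, Min T} (stable_matching G)))"
    by (rule subset_exp_delete_vertex[OF assms(1),
          where g = "\<lambda>G. f (insert {v0, Min T} (stable_matching G))" and m = "Min T"])
  finally show ?thesis .
qed

lemma subset_exp_stable_matching_decomp:
  assumes "finite V" "\<forall>x\<in>V. v0 < x"
  shows "subset_exp p (complete_edges (insert v0 V)) (\<lambda>E. f (stable_matching E)) =
     (1 - p) ^ card V * subset_exp p (complete_edges V) (\<lambda>G. f (stable_matching G))
     + (\<Sum>m\<in>V. p * (1 - p) ^ rank_below V m *
          subset_exp p (complete_edges (V - {m})) (\<lambda>G. f (insert {v0, m} (stable_matching G))))"
proof -
  let ?h = "\<lambda>x. {v0, x}"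
  define c0 where "c0 = subset_exp p (complete_edges V) (\<lambda>G. f (stable_matching G))"
  define c where "c m = subset_exp p (complete_edges (V - {m}))
      (\<lambda>G. f (insert {v0, m} (stable_matching G)))" for m
  have v0_notin: "v0 \<notin> V" using assms(2) by blast
  have inj: "inj_on ?h V" by (auto simp: inj_on_def doubleton_eq_iff)
  have disj: "?h ` V \<inter> complete_edges V = {}" using v0_notin complete_edges_Pow by blast
  have "subset_exp p (complete_edges (insert v0 V)) (\<lambda>E. f (stable_matching E))
      = subset_exp p (?h ` V) (\<lambda>F. subset_exp p (complete_edges V) (\<lambda>G. f (stable_matching (F \<union> G))))"
    unfolding complete_edges_insert[OF v0_notin]
    using assms(1) finite_complete_edges disj by (intro subset_exp_union) auto
  also have "\<dots> = subset_exp p V (\<lambda>T. subset_exp p (complete_edges V) (\<lambda>G. f (stable_matching (?h ` T \<union> G))))"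
    using inj by (rule subset_exp_image)
  also have "\<dots> = subset_exp p V (\<lambda>T. if T = {} then c0 else c (Min T))"
    by (rule subset_exp_cong) (simp add: c0_def c_def subset_exp_given_star[OF assms])
  also have "\<dots> = (1 - p) ^ card V * c0 + (\<Sum>m\<in>V. p * (1 - p) ^ rank_below V m * c m)"
    using assms(1) by (rule subset_exp_Min)
  finally show ?thesis unfolding c_def c0_def .
qed

lemma all_edges_complete: "all_edges N = complete_edges {1..N}"
  unfolding all_edges_def complete_edges_def by simp

section \<open>The limit function D\<close>

text \<open>The recursion of the theorem, as a terminating function on pairs i < j (by recursion
  on the smaller index), and its symmetric extension match_prob, which is the function D
  of the theorem.\<close>

fun match_prob_rec :: "real \<Rightarrow> nat \<Rightarrow> nat \<Rightarrow> real" where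
  "match_prob_rec p 0 j = 0"
| "match_prob_rec p (Suc 0) j = p * (1 - p) ^ (j - 2)"
| "match_prob_rec p (Suc (Suc i)) j =
     (if i = 0 then 0 else (1 - (1 - p) ^ i) * match_prob_rec p i (j - 2))
     + ((1 - p) ^ Suc i - (1 - p) ^ (j - 2)) * match_prob_rec p (Suc i) (j - 2)
     + (1 - p) ^ (j - 1) * match_prob_rec p (Suc i) (j - 1)"

definition match_prob :: "real \<Rightarrow> nat \<Rightarrow> nat \<Rightarrow> real" where
  "match_prob p i j =
     (if i < j then match_prob_rec p i j else if j < i then match_prob_rec p j i else 0)"

lemma match_prob_sym: "match_prob p i j = match_prob p j i"
  unfolding match_prob_def by auto

lemma match_prob_diag: "match_prob p i i = 0"
  unfolding match_prob_def by simp

lemma match_prob_zero: "match_prob p 0 j = 0"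
  unfolding match_prob_def by simp

lemma match_prob_first_row: "2 \<le> k \<Longrightarrow> match_prob p 1 k = p * (1 - p) ^ (k - 2)"
  unfolding match_prob_def by simp

text \<open>The recursion of the theorem, stated for match_prob itself.  The middle term needs
  care only when i - 1 = j - 2, where its coefficient vanishes.\<close>

lemma match_prob_recursion:
  assumes "2 \<le> i" "i < j"
  shows "match_prob p i j =
           (if i = 2 then 0 else (1 - (1 - p) ^ (i - 2)) * match_prob p (i - 2) (j - 2))
         + ((1 - p) ^ (i - 1) - (1 - p) ^ (j - 2)) * match_prob p (i - 1) (j - 2)
         + (1 - p) ^ (j - 1) * match_prob p (i - 1) (j - 1)"
proof -
  obtain k where i: "i = Suc (Suc k)" using assms(1) by (metis add_2_eq_Suc le_Suc_ex)
  have "k < j - 2" using assms i by simp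
  have first: "(if i = 2 then 0 else (1 - (1 - p) ^ (i - 2)) * match_prob p (i - 2) (j - 2))
      = (if k = 0 then 0 else (1 - (1 - p) ^ k) * match_prob_rec p k (j - 2))"
    using assms i \<open>k < j - 2\<close> by (simp add: match_prob_def)
  have middle: "((1 - p) ^ (i - 1) - (1 - p) ^ (j - 2)) * match_prob p (i - 1) (j - 2)
      = ((1 - p) ^ Suc k - (1 - p) ^ (j - 2)) * match_prob_rec p (Suc k) (j - 2)"
  proof (cases "Suc k = j - 2")
    case True
    then show ?thesis using i by simp
  next
    case False
    then have "Suc k < j - 2" using assms i by simp
    then show ?thesis using i by (simp add: match_prob_def)
  qed
  have "Suc k < j - 1" using assms i by simp
  then have last: "match_prob p (i - 1) (j - 1) = match_prob_rec p (Suc k) (j - 1)"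
    using i by (simp add: match_prob_def)
  have "match_prob p i j = match_prob_rec p (Suc (Suc k)) j"
    using assms i by (simp add: match_prob_def)
  then show ?thesis unfolding first middle last by simp
qed

lemma geometric_block:
  fixes p c :: real
  assumes "\<And>r. r \<in> {a..<b} \<Longrightarrow> f r = p * (1 - p) ^ r * c" "a \<le> b"
  shows "sum f {a..<b} = c * ((1 - p) ^ a - (1 - p) ^ b)"
  using assms
proof (induction b)
  case 0
  then show ?case by simp
next
  case (Suc b)
  show ?case
  proof (cases "a = Suc b")
    case True
    then show ?thesis by simp
  next
    case False
    then have "a \<le> b" using Suc.prems(2) by simp
    then have "sum f {a..<b} = c * ((1 - p) ^ a - (1 - p) ^ b)"
      using Suc.IH Suc.prems(1) by simp
    moreover have "f b = p * (1 - p) ^ b * c" using Suc.prems(1) \<open>a \<le> b\<close> by simp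
    ultimately show ?thesis using \<open>a \<le> b\<close> by (simp add: algebra_simps)
  qed
qed

text \<open>Let a < b have 0-based ranks i < j in V.  If the vertex of rank r is deleted from V,
  the 1-based ranks of a and b in the smaller set are given below (and the pair disappears
  if r is i or j); deleted_match_prob p i j r is the corresponding value of D.\<close>

definition deleted_match_prob :: "real \<Rightarrow> nat \<Rightarrow> nat \<Rightarrow> nat \<Rightarrow> real" where
  "deleted_match_prob p i j r =
     (if r = i \<or> r = j then 0
      else match_prob p (if r < i then i else i + 1) (if r < j then j else j + 1))"

text \<open>The mixture over the deleted rank splits into three geometric blocks.\<close>

lemma deleted_match_prob_sum:
  assumes "i < j" "j < n"
  shows "(\<Sum>r<n. p * (1 - p) ^ r * deleted_match_prob p i j r)
       = match_prob p i j * (1 - (1 - p) ^ i)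
       + match_prob p (i + 1) j * ((1 - p) ^ Suc i - (1 - p) ^ j)
       + match_prob p (i + 1) (j + 1) * ((1 - p) ^ Suc j - (1 - p) ^ n)"
proof -
  define \<phi> where "\<phi> r = p * (1 - p) ^ r * deleted_match_prob p i j r" for r
  have "(\<Sum>r<n. \<phi> r) = sum \<phi> {0..<i} + sum \<phi> {i..<n}"
    using assms by (simp add: atLeast0LessThan[symmetric] sum.atLeastLessThan_concat)
  also have "sum \<phi> {i..<n} = \<phi> i + sum \<phi> {Suc i..<n}"
    using assms by (simp add: sum.atLeast_Suc_lessThan)
  also have "sum \<phi> {Suc i..<n} = sum \<phi> {Suc i..<j} + sum \<phi> {j..<n}"
    using assms by (simp add: sum.atLeastLessThan_concat)
  also have "sum \<phi> {j..<n} = \<phi> j + sum \<phi> {Suc j..<n}"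
    using assms by (simp add: sum.atLeast_Suc_lessThan)
  also have "sum \<phi> {0..<i} = match_prob p i j * (1 - (1 - p) ^ i)"
    using assms by (subst geometric_block[where c = "match_prob p i j"]) (auto simp: \<phi>_def deleted_match_prob_def)
  also have "sum \<phi> {Suc i..<j} = match_prob p (i + 1) j * ((1 - p) ^ Suc i - (1 - p) ^ j)"
    using assms by (subst geometric_block[where c = "match_prob p (i + 1) j"]) (auto simp: \<phi>_def deleted_match_prob_def)
  also have "sum \<phi> {Suc j..<n} = match_prob p (i + 1) (j + 1) * ((1 - p) ^ Suc j - (1 - p) ^ n)"
    using assms by (subst geometric_block[where c = "match_prob p (i + 1) (j + 1)"]) (auto simp: \<phi>_def deleted_match_prob_def)
  finally show ?thesis by (simp add: \<phi>_def deleted_match_prob_def)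
qed

text \<open>The key identity: the first-step mixture of the values of D reproduces D with both
  ranks shifted by two.  This is where the recursion of the theorem comes from.\<close>

lemma match_prob_mixture:
  assumes "i < j" "j < n"
  shows "(1 - p) ^ n * match_prob p (i + 1) (j + 1)
         + (\<Sum>r<n. p * (1 - p) ^ r * deleted_match_prob p i j r) = match_prob p (i + 2) (j + 2)"
proof -
  have "match_prob p (i + 2) (j + 2) = match_prob p i j * (1 - (1 - p) ^ i)
       + match_prob p (i + 1) j * ((1 - p) ^ Suc i - (1 - p) ^ j)
       + (1 - p) ^ Suc j * match_prob p (i + 1) (j + 1)"
    using match_prob_recursion[of "i + 2" "j + 2" p] assms
    by (cases "i = 0") (simp_all add: match_prob_zero mult.commute)
  then show ?thesis
    unfolding deleted_match_prob_sum[OF assms] by (simp add: algebra_simps)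
qed

section \<open>Matching probabilities depend only on ranks\<close>

text \<open>rank S x is the 1-based rank of x in S.\<close>

definition rank :: "nat set \<Rightarrow> nat \<Rightarrow> nat" where
  "rank S x = card {y\<in>S. y \<le> x}"

lemma rank_below_less: "finite S \<Longrightarrow> x \<in> S \<Longrightarrow> x < y \<Longrightarrow> rank_below S x < rank_below S y"
  unfolding rank_below_def by (rule psubset_card_mono) auto

lemma rank_below_less_iff:
  "finite S \<Longrightarrow> x \<in> S \<Longrightarrow> y \<in> S \<Longrightarrow> rank_below S x < rank_below S y \<longleftrightarrow> x < y"
  by (metis less_asym linorder_neqE_nat rank_below_less)

lemma rank_below_eq_iff:
  "finite S \<Longrightarrow> x \<in> S \<Longrightarrow> y \<in> S \<Longrightarrow> rank_below S x = rank_below S y \<longleftrightarrow> x = y"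
  by (metis less_irrefl_nat linorder_neqE_nat rank_below_less)

lemma bij_betw_rank_below:
  assumes "finite S"
  shows "bij_betw (rank_below S) S {..<card S}"
proof -
  have inj: "inj_on (rank_below S) S"
    using rank_below_eq_iff[OF assms] by (auto simp: inj_on_def)
  have "rank_below S x < card S" if "x \<in> S" for x
    unfolding rank_below_def using assms that by (intro psubset_card_mono) auto
  then have "rank_below S ` S \<subseteq> {..<card S}" by auto
  moreover have "card (rank_below S ` S) = card {..<card S}"
    using card_image[OF inj] by simp
  ultimately have "rank_below S ` S = {..<card S}" by (simp add: card_subset_eq)
  then show ?thesis using inj by (simp add: bij_betw_def)
qed

lemma rank_eq_Suc_rank_below: "finite S \<Longrightarrow> x \<in> S \<Longrightarrow> rank S x = Suc (rank_below S x)"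
proof -
  assume "finite S" "x \<in> S"
  then have "{y\<in>S. y \<le> x} = insert x {y\<in>S. y < x}" by auto
  then show ?thesis unfolding rank_def rank_below_def using \<open>finite S\<close> by simp
qed

lemma rank_Diff:
  assumes "finite S" "x \<in> S" "m \<in> S" "m \<noteq> x"
  shows "rank (S - {m}) x = (if m < x then rank_below S x else Suc (rank_below S x))"
proof -
  have "rank (S - {m}) x = Suc (rank_below (S - {m}) x)"
    using assms by (intro rank_eq_Suc_rank_below) auto
  moreover have "{y\<in>S - {m}. y < x} = {y\<in>S. y < x} - {m}" by auto
  ultimately have "rank (S - {m}) x = Suc (card ({y\<in>S. y < x} - {m}))"
    unfolding rank_below_def by simp
  moreover have "card ({y\<in>S. y < x} - {m}) = (if m < x then rank_below S x - 1 else rank_below S x)"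
    using assms(1,3) unfolding rank_below_def by auto
  moreover have "0 < rank_below S x" if "m < x"
  proof -
    have "rank_below S m < rank_below S x" using rank_below_less[OF assms(1,3) that] .
    then show ?thesis by simp
  qed
  ultimately show ?thesis by auto
qed

lemma rank_insert_min:
  assumes "finite V" "\<forall>y\<in>V. v0 < y" "x \<in> V"
  shows "rank (insert v0 V) x = rank_below V x + 2"
proof -
  have "{y\<in>insert v0 V. y \<le> x} = insert v0 (insert x {y\<in>V. y < x})"
    using assms by auto
  moreover have "v0 \<notin> insert x {y\<in>V. y < x}" using assms by auto
  ultimately show ?thesis unfolding rank_def rank_below_def using assms(1) by simp
qed

lemma rank_atLeastAtMost: "1 \<le> i \<Longrightarrow> i \<le> N \<Longrightarrow> rank {1..N} i = i"
proof -
  assume "1 \<le> i" "i \<le> N"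
  then have "{y\<in>{1..N}. y \<le> i} = {1..i}" by auto
  then show ?thesis unfolding rank_def by simp
qed

definition pair_prob :: "real \<Rightarrow> nat set \<Rightarrow> nat \<Rightarrow> nat \<Rightarrow> real" where
  "pair_prob p V a b =
     subset_exp p (complete_edges V) (\<lambda>E. if {a, b} \<in> stable_matching E then 1 else 0)"

lemma pair_prob_commute: "pair_prob p V a b = pair_prob p V b a"
  unfolding pair_prob_def by (simp add: insert_commute)

lemma stable_matching_subset_complete:
  "finite V \<Longrightarrow> G \<subseteq> complete_edges V \<Longrightarrow> stable_matching G \<subseteq> G"
  using stable_matching_stable[of G] finite_complete_edges[of V] finite_subset
    proper_graph_complete_edges[of G V]
  unfolding stable_def by blast

lemma pair_prob_non_edge:
  assumes "finite V" "{a, b} \<notin> complete_edges V"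
  shows "pair_prob p V a b = 0"
proof -
  have "pair_prob p V a b = subset_exp p (complete_edges V) (\<lambda>_. 0)"
    unfolding pair_prob_def
  proof (rule subset_exp_cong)
    fix G assume "G \<subseteq> complete_edges V"
    then have "stable_matching G \<subseteq> complete_edges V"
      using stable_matching_subset_complete[OF assms(1)] by blast
    then show "(if {a, b} \<in> stable_matching G then 1 else 0) = (0::real)" using assms(2) by auto
  qed
  then show ?thesis using assms(1) finite_complete_edges by (simp add: subset_exp_const)
qed

lemma pair_prob_decomp:
  assumes "finite V" "\<forall>y\<in>V. v0 < y" "a \<in> V" "b \<in> V"
  shows "pair_prob p (insert v0 V) a b = (1 - p) ^ card V * pair_prob p V a b
     + (\<Sum>m\<in>V. p * (1 - p) ^ rank_below V m * pair_prob p (V - {m}) a b)"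
proof -
  have "{a, b} \<noteq> {v0, m}" for m using assms(2-4) by (auto simp: doubleton_eq_iff)
  then have "subset_exp p (complete_edges (V - {m}))
        (\<lambda>G. if {a, b} \<in> insert {v0, m} (stable_matching G) then 1 else 0)
      = pair_prob p (V - {m}) a b" for m
    unfolding pair_prob_def by simp
  then show ?thesis
    unfolding pair_prob_def
    using subset_exp_stable_matching_decomp[OF assms(1,2),
        where f = "\<lambda>M. if {a, b} \<in> M then 1 else 0"]
    by simp
qed

lemma partner_indicator_exp:
  assumes "finite V" "v0 \<notin> V"
  shows "subset_exp p (complete_edges (V - {m}))
           (\<lambda>G. if {v0, b} \<in> insert {v0, m} (stable_matching G) then 1 else 0)
       = (if m = b then 1 else 0)"
proof (cases "m = b")
  case True
  then show ?thesis using assms(1) by (simp add: subset_exp_const finite_complete_edges)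
next
  case False
  have "{v0, b} \<notin> insert {v0, m} (stable_matching G)" if "G \<subseteq> complete_edges (V - {m})" for G
  proof
    assume "{v0, b} \<in> insert {v0, m} (stable_matching G)"
    moreover have "{v0, b} \<noteq> {v0, m}" using False by (auto simp: doubleton_eq_iff)
    moreover have "stable_matching G \<subseteq> Pow (V - {m})"
      using stable_matching_subset_complete[OF _ that] assms(1) complete_edges_Pow that
      by (meson finite_Diff order_trans)
    ultimately show False using assms(2) by auto
  qed
  then have "subset_exp p (complete_edges (V - {m}))
      (\<lambda>G. if {v0, b} \<in> insert {v0, m} (stable_matching G) then 1 else 0)
    = subset_exp p (complete_edges (V - {m})) (\<lambda>_. 0)"
    by (intro subset_exp_cong) simp
  then show ?thesis using False assms(1) by (simp add: subset_exp_const finite_complete_edges)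
qed

lemma pair_prob_min:
  assumes "finite V" "\<forall>y\<in>V. v0 < y" "b \<in> V"
  shows "pair_prob p (insert v0 V) v0 b = p * (1 - p) ^ rank_below V b"
proof -
  have v0_notin: "v0 \<notin> V" using assms(2) by blast
  have "{v0, b} \<notin> complete_edges V"
  proof
    assume "{v0, b} \<in> complete_edges V"
    then have "{v0, b} \<subseteq> V" using complete_edges_Pow by blast
    then show False using v0_notin by simp
  qed
  then have no_edge: "pair_prob p V v0 b = 0" using assms(1) by (rule pair_prob_non_edge[rotated])
  have "pair_prob p (insert v0 V) v0 b
      = (\<Sum>m\<in>V. p * (1 - p) ^ rank_below V m * (if m = b then 1 else 0))"
    using subset_exp_stable_matching_decomp[OF assms(1,2),
        where f = "\<lambda>M. if {v0, b} \<in> M then 1 else 0" and p = p]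
    unfolding pair_prob_def[symmetric] partner_indicator_exp[OF assms(1) v0_notin] no_edge
    by simp
  also have "\<dots> = p * (1 - p) ^ rank_below V b"
    using assms(1,3) by (simp add: if_distrib[of "\<lambda>x. _ * x"] cong: if_cong)
  finally show ?thesis .
qed

lemma pair_prob_delete:
  assumes fin: "finite V" and ab: "a \<in> V" "b \<in> V" and m: "m \<in> V"
    and IH: "m \<noteq> a \<Longrightarrow> m \<noteq> b \<Longrightarrow>
               pair_prob p (V - {m}) a b = match_prob p (rank (V - {m}) a) (rank (V - {m}) b)"
  shows "pair_prob p (V - {m}) a b
       = deleted_match_prob p (rank_below V a) (rank_below V b) (rank_below V m)"
proof (cases "m = a \<or> m = b")
  case True
  then have "{a, b} \<notin> complete_edges (V - {m})" using complete_edges_Pow by blast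
  then show ?thesis
    using True fin by (auto simp: pair_prob_non_edge deleted_match_prob_def)
next
  case False
  then have "pair_prob p (V - {m}) a b = match_prob p (rank (V - {m}) a) (rank (V - {m}) b)"
    using IH by blast
  also have "\<dots> = match_prob p
      (if m < a then rank_below V a else rank_below V a + 1)
      (if m < b then rank_below V b else rank_below V b + 1)"
    using rank_Diff[OF fin ab(1) m] rank_Diff[OF fin ab(2) m] False by simp
  finally show ?thesis
    using False rank_below_eq_iff[OF fin m] rank_below_less_iff[OF fin m] ab
    by (simp add: deleted_match_prob_def)
qed

text \<open>Induction step: if the claim holds for subsets of V, the first-step decomposition and
  the mixture identity give it for insert v0 V (for pairs avoiding v0).\<close>

lemma pair_prob_step:
  assumes fin: "finite V" and v0: "\<forall>y\<in>V. v0 < y"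
    and ab: "a \<in> V" "b \<in> V" "a < b"
    and IH: "\<And>W. W \<subseteq> V \<Longrightarrow> a \<in> W \<Longrightarrow> b \<in> W \<Longrightarrow>
               pair_prob p W a b = match_prob p (rank W a) (rank W b)"
  shows "pair_prob p (insert v0 V) a b = match_prob p (rank_below V a + 2) (rank_below V b + 2)"
proof -
  define i where "i = rank_below V a"
  define j where "j = rank_below V b"
  have ij: "i < j" "j < card V"
    unfolding i_def j_def
    using rank_below_less[OF fin ab(1,3)] bij_betw_apply[OF bij_betw_rank_below[OF fin] ab(2)]
    by auto
  have deleted: "pair_prob p (V - {m}) a b = deleted_match_prob p i j (rank_below V m)"
    if "m \<in> V" for m
    unfolding i_def j_def using ab
    by (intro pair_prob_delete[OF fin ab(1,2) that] IH) auto
  have "(\<Sum>m\<in>V. p * (1 - p) ^ rank_below V m * pair_prob p (V - {m}) a b)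
      = (\<Sum>m\<in>V. p * (1 - p) ^ rank_below V m * deleted_match_prob p i j (rank_below V m))"
    by (rule sum.cong) (simp_all add: deleted)
  also have "\<dots> = (\<Sum>r<card V. p * (1 - p) ^ r * deleted_match_prob p i j r)"
    using bij_betw_rank_below[OF fin] by (rule sum.reindex_bij_betw)
  finally have "pair_prob p (insert v0 V) a b
      = (1 - p) ^ card V * match_prob p (i + 1) (j + 1)
        + (\<Sum>r<card V. p * (1 - p) ^ r * deleted_match_prob p i j r)"
    using pair_prob_decomp[OF fin v0 ab(1,2)] IH[OF order_refl ab(1,2)]
      rank_eq_Suc_rank_below[OF fin] ab by (simp add: i_def j_def)
  also have "\<dots> = match_prob p (i + 2) (j + 2)"
    using ij by (rule match_prob_mixture)
  finally show ?thesis unfolding i_def j_def .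
qed

lemma Min_split:
  fixes V :: "nat set"
  assumes "finite V" "V \<noteq> {}"
  shows "V = insert (Min V) (V - {Min V})" and "\<forall>y\<in>V - {Min V}. Min V < y"
proof -
  have "Min V \<in> V" using assms by (rule Min_in)
  then show "V = insert (Min V) (V - {Min V})" by blast
  show "\<forall>y\<in>V - {Min V}. Min V < y" using assms by (auto simp: less_le)
qed

text \<open>The claim for a pair a < b in V, assuming it for all proper subsets of V: split off
  the minimum v0 of V, which is either a itself or below both a and b.\<close>

lemma pair_prob_rank_ordered:
  assumes fin: "finite V" and ab: "a \<in> V" "b \<in> V" "a < b"
    and IH: "\<And>W. W \<subset> V \<Longrightarrow> a \<in> W \<Longrightarrow> b \<in> W \<Longrightarrow>
               pair_prob p W a b = match_prob p (rank W a) (rank W b)"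
  shows "pair_prob p V a b = match_prob p (rank V a) (rank V b)"
proof -
  define v0 where "v0 = Min V"
  define V1 where "V1 = V - {v0}"
  have "V \<noteq> {}" using ab(1) by blast
  then have V: "V = insert v0 V1" and v0: "\<forall>y\<in>V1. v0 < y"
    unfolding v0_def V1_def using Min_split[OF fin] by blast+
  have fin1: "finite V1" using fin unfolding V1_def by simp
  have b1: "b \<in> V1" using ab V v0 by auto
  show ?thesis
  proof (cases "a = v0")
    case True
    then have "{y\<in>V. y \<le> a} = {a}" using V v0 by auto
    then have "rank V a = 1" unfolding rank_def by simp
    then show ?thesis
      using True pair_prob_min[OF fin1 v0 b1] rank_insert_min[OF fin1 v0 b1] V
        match_prob_first_row[of "rank_below V1 b + 2" p] by simp
  next
    case False
    then have a1: "a \<in> V1" using ab(1) V by blast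
    have "v0 \<notin> V1" unfolding V1_def by simp
    then have "V1 \<subset> V" using V by blast
    then have "pair_prob p W a b = match_prob p (rank W a) (rank W b)"
      if "W \<subseteq> V1" "a \<in> W" "b \<in> W" for W
      using that by (intro IH) auto
    then show ?thesis
      using pair_prob_step[OF fin1 v0 a1 b1 ab(3)] V
        rank_insert_min[OF fin1 v0 a1] rank_insert_min[OF fin1 v0 b1] by simp
  qed
qed

lemma pair_prob_rank:
  "finite V \<Longrightarrow> a \<in> V \<Longrightarrow> b \<in> V \<Longrightarrow> pair_prob p V a b = match_prob p (rank V a) (rank V b)"
proof (induction "card V" arbitrary: V a b rule: less_induct)
  case less
  have IH: "pair_prob p W x y = match_prob p (rank W x) (rank W y)"
    if "W \<subset> V" "x \<in> W" "y \<in> W" for W x y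
  proof -
    have "finite W" using that(1) less.prems(1) by (meson finite_subset psubset_imp_subset)
    then show ?thesis
      using less.hyps[OF psubset_card_mono[OF less.prems(1) that(1)]] that(2,3) by blast
  qed
  show ?case
  proof (cases a b rule: linorder_cases)
    case less
    with less.prems show ?thesis by (rule pair_prob_rank_ordered) (rule IH)
  next
    case equal
    then have "{a, b} \<notin> complete_edges V" unfolding complete_edges_def by (auto simp: doubleton_eq_iff)
    then show ?thesis using equal less.prems(1) by (simp add: pair_prob_non_edge match_prob_diag)
  next
    case greater
    with less.prems(1,3,2) have "pair_prob p V b a = match_prob p (rank V b) (rank V a)"
      by (rule pair_prob_rank_ordered) (rule IH)
    then show ?thesis by (simp add: pair_prob_commute match_prob_sym)
  qed
qed

lemma DN_eq_pair_prob: "DN N p i j = pair_prob p {1..N} i j"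
  unfolding DN_def pair_prob_def er_prob_eq_subset_exp all_edges_complete ..

theorem mainTheorem4:
  fixes p :: real
  assumes "0 < p" and "p \<le> 1"
  shows "\<exists>D :: nat \<Rightarrow> nat \<Rightarrow> real.
    (\<forall>N i j. 2 \<le> N \<longrightarrow> 1 \<le> i \<longrightarrow> 1 \<le> j \<longrightarrow> max i j \<le> N \<longrightarrow> DN N p i j = D i j)
  \<and> (\<forall>i. 1 \<le> i \<longrightarrow> D i i = 0)
  \<and> (\<forall>i j. 1 \<le> i \<longrightarrow> 1 \<le> j \<longrightarrow> D i j = D j i)
  \<and> (\<forall>k. 2 \<le> k \<longrightarrow> D 1 k = p * (1 - p) ^ (k - 2))
  \<and> (\<forall>i j. 2 \<le> i \<longrightarrow> i < j \<longrightarrow>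
        D i j = (if i = 2 then 0 else (1 - (1 - p) ^ (i - 2)) * D (i - 2) (j - 2))
              + ((1 - p) ^ (i - 1) - (1 - p) ^ (j - 2)) * D (i - 1) (j - 2)
              + (1 - p) ^ (j - 1) * D (i - 1) (j - 1))"
proof (intro exI[of _ "match_prob p"] conjI allI impI)
  fix N i j :: nat
  assume "2 \<le> N" "1 \<le> i" "1 \<le> j" "max i j \<le> N"
  then show "DN N p i j = match_prob p i j"
    using pair_prob_rank[of "{1..N}" i j p] rank_atLeastAtMost[of i N] rank_atLeastAtMost[of j N]
    by (simp add: DN_eq_pair_prob)
next
  fix i :: nat
  show "match_prob p i i = 0" by (rule match_prob_diag)
next
  fix i j :: nat
  show "match_prob p i j = match_prob p j i" by (rule match_prob_sym)
next
  fix k :: nat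
  assume "2 \<le> k"
  then show "match_prob p 1 k = p * (1 - p) ^ (k - 2)" by (rule match_prob_first_row)
next
  fix i j :: nat
  assume "2 \<le> i" "i < j"
  then show "match_prob p i j =
      (if i = 2 then 0 else (1 - (1 - p) ^ (i - 2)) * match_prob p (i - 2) (j - 2))
      + ((1 - p) ^ (i - 1) - (1 - p) ^ (j - 2)) * match_prob p (i - 1) (j - 2)
      + (1 - p) ^ (j - 1) * match_prob p (i - 1) (j - 1)"
    by (rule match_prob_recursion)
qed

end
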